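(* The infinite matrix $A=[a_{ij}]_{i,j\in\mathbb N}$ with $a_{ij}=1$ if $j\in\{i,i+1\}$ and $a_{ij}=0$ otherwise has Schur norm $\|A\|_\bullet=4/\pi$.
   Context: Fix $\mathbb F\in\{\mathbb R,\mathbb C\}$. For an infinite matrix $A$, the Schur norm is $\|A\|_\bullet=\sup\{\|A\bullet X\|: X\in\mathcal B(\ell^2),\ \|X\|\le1\}$, where $A\bullet X=[a_{ij}x_{ij}]$ is the entrywise product and $\|\cdot\|$ is the operator norm on $\ell^2=\ell^2(\mathbb N,\mathbb F)$ (with value $\infty$ if some $A\bullet X$ is unbounded). *)

theory Defs
  imports "HOL-Analysis.Analysis"
begin

text \<open>The operator norm on l2 of an infinite matrix X is
taken (extended-real valued, possibly infinity) as the supremum of the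
operator norms of its finite n x n leading sections, i.e. the supremum of
the l2 norm of X x over finitely supported vectors x of l2 norm at most 1.
This is the operator norm of X as an element of B(l2) when X is bounded,
and infinity otherwise.\<close>

definition mat_op_norm :: "(nat \<Rightarrow> nat \<Rightarrow> 'a::real_normed_field) \<Rightarrow> ereal" where
  "mat_op_norm X =
     (SUP n. SUP x \<in> {x :: nat \<Rightarrow> 'a. (\<Sum>j<n. (norm (x j))^2) \<le> 1}.
        ereal (sqrt (\<Sum>i<n. (norm (\<Sum>j<n. X i j * x j))^2)))"

definition schur_prod :: "(nat \<Rightarrow> nat \<Rightarrow> 'a::times) \<Rightarrow> (nat \<Rightarrow> nat \<Rightarrow> 'a) \<Rightarrow> nat \<Rightarrow> nat \<Rightarrow> 'a" where
  "schur_prod A X = (\<lambda>i j. A i j * X i j)"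

definition schur_norm :: "(nat \<Rightarrow> nat \<Rightarrow> 'a::real_normed_field) \<Rightarrow> ereal" where
  "schur_norm A = (SUP X \<in> {X. mat_op_norm X \<le> 1}. mat_op_norm (schur_prod A X))"

definition bidiag_ones :: "nat \<Rightarrow> nat \<Rightarrow> 'a::zero_neq_one" where
  "bidiag_ones i j = (if j = i \<or> j = i + 1 then 1 else 0)"

end

theory Submission
  imports Defs "HOL-Real_Asymp.Real_Asymp"
begin

text \<open>
  Put \<theta>_k = -\<pi> + (2k+1)\<pi>/M for k < M and w_k = 2 cos(\<theta>_k/2)/M \<ge> 0. Orthogonality of the
  characters e^{il\<theta>} on these nodes gives a_ij = \<Sum>_k w_k cos((i - j + 1/2)\<theta>_k) for i, j < n < M.
  Every matrix [cos(\<alpha>_i - \<beta>_j)] is a Schur multiplier of norm at most 1, hence the Schur norm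
  is at most \<Sum>_k w_k = 2/(M sin(\<pi>/2M)), which tends to 4/\<pi>.

  Conversely, with F = [e^{ij\<theta>_k}] the matrix U = F diag(e^{i\<theta>_k/2}) F^*/N is unitary and
  Re(u_{i,i} + u_{i,i+1}) = 2/(N sin(\<pi>/2N)). Applying the Schur product of A and U to the constant
  unit vector of length N shows that the Schur norm is at least \<surd>((N-1)/N) \<cdot> 2/(N sin(\<pi>/2N)).
  Over the reals, Re U serves as the test matrix.
\<close>

lemma sum_cis_roots_of_unity:
  fixes M :: nat and l :: int
  assumes M: "M > 0" and l: "\<bar>l\<bar> < int M"
  shows "(\<Sum>k<M. cis (2 * pi * real k * of_int l / real M)) = (if l = 0 then of_nat M else 0)"
proof (cases "l = 0")
  case True then show ?thesis by simp
next
  case False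
  define z where "z = cis (2 * pi * of_int l / real M)"
  have z_power: "z ^ k = cis (2 * pi * real k * of_int l / real M)" for k
    by (simp add: z_def Complex.DeMoivre mult_ac)
  have "2 * pi * real M * of_int l / real M = 2 * pi * of_int l"
    using M by simp
  then have "z ^ M = 1"
    unfolding z_power by simp
  moreover have "z \<noteq> 1"
  proof
    assume "z = 1"
    then have "cos (2 * pi * of_int l / real M) = 1"
      unfolding z_def by (metis cis.sel(1) one_complex.sel(1))
    then obtain m :: int where "2 * pi * of_int l / real M = of_int m * 2 * pi"
      using cos_one_2pi_int by blast
    then have "of_int l = of_int m * real M" using M by (simp add: field_simps)
    then have "l = m * int M" by (metis of_int_eq_iff of_int_mult of_int_of_nat_eq)
    with l False show False
      by (cases "m = 0") (auto simp: abs_mult)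
  qed
  ultimately have "(\<Sum>k<M. z ^ k) = 0" by (simp add: sum_gp_strict)
  then show ?thesis using False by (simp add: z_power)
qed

definition node :: "nat \<Rightarrow> nat \<Rightarrow> real" where
  "node M k = - pi + (2 * real k + 1) * pi / real M"

lemma sum_cis_int_mult_node:
  fixes M :: nat and l :: int
  assumes "M > 0" "\<bar>l\<bar> < int M"
  shows "(\<Sum>k<M. cis (of_int l * node M k)) = (if l = 0 then of_nat M else 0)"
proof -
  have "cis (of_int l * node M k) =
      cis (of_int l * (pi / real M - pi)) * cis (2 * pi * real k * of_int l / real M)" for k
    unfolding cis_mult node_def using assms by (simp add: field_simps)
  then show ?thesis
    using sum_cis_roots_of_unity[OF assms] by (simp flip: sum_distrib_left)
qed

lemma sum_cos_int_mult_node: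
  fixes M :: nat and l :: int
  assumes "M > 0" "\<bar>l\<bar> < int M"
  shows "(\<Sum>k<M. cos (of_int l * node M k)) = (if l = 0 then real M else 0)"
  using arg_cong[OF sum_cis_int_mult_node[OF assms], of Re] by simp

lemma sum_sin_odd_mult_times_sin:
  "(\<Sum>k<M. sin ((2 * real k + 1) * x)) * sin x = (sin (real M * x))^2"
proof (induction M)
  case 0 then show ?case by simp
next
  case (Suc M)
  have "sin ((2 * real M + 1) * x) * sin x = (sin ((real M + 1) * x))^2 - (sin (real M * x))^2"
  proof -
    have c: "sin ((2 * real M + 1) * x) * sin x =
        (cos ((2 * real M + 1) * x - x) - cos ((2 * real M + 1) * x + x)) / 2"
      by (simp add: cos_diff cos_add)
    have d: "(2 * real M + 1) * x - x = 2 * (real M * x)"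
      "(2 * real M + 1) * x + x = 2 * ((real M + 1) * x)"
      by algebra+
    show ?thesis unfolding c d cos_double_sin by simp
  qed
  then show ?case using Suc by (simp add: distrib_right add.commute)
qed

lemma cos_half_node: "cos (node M k / 2) = sin ((2 * real k + 1) * (pi / (2 * real M)))"
proof (cases "M = 0")
  case False
  then have "node M k / 2 = (2 * real k + 1) * (pi / (2 * real M)) - pi / 2"
    unfolding node_def by (simp add: field_simps)
  then show ?thesis by (simp only:) (simp add: cos_diff)
qed (simp add: node_def)

lemma cos_half_node_pos:
  assumes "k < M"
  shows "cos (node M k / 2) > 0"
proof -
  have "0 < (2 * real k + 1) * pi" by simp
  moreover have "(2 * real k + 1) * pi < (2 * real M) * pi"
    using assms by (intro mult_strict_right_mono) auto
  ultimately show ?thesis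
    unfolding cos_half_node using assms by (intro sin_gt_zero) (auto simp: field_simps)
qed

definition bidiag_bound :: "nat \<Rightarrow> real" where
  "bidiag_bound M = 2 / (real M * sin (pi / (2 * real M)))"

lemma bidiag_bound_nonneg: "bidiag_bound M \<ge> 0"
proof (cases "M = 0")
  case False
  then have "sin (pi / (2 * real M)) > 0"
    by (intro sin_gt_zero) (auto simp: field_simps)
  then show ?thesis by (simp add: bidiag_bound_def)
qed (simp add: bidiag_bound_def)

lemma bidiag_bound_tendsto: "bidiag_bound \<longlonglongrightarrow> 4 / pi"
  unfolding bidiag_bound_def by real_asymp

lemma sum_cos_half_node:
  assumes "M > 0"
  shows "2 * (\<Sum>k<M. cos (node M k / 2)) / real M = bidiag_bound M"
proof -
  have s: "sin (pi / (2 * real M)) > 0" using assms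
    by (intro sin_gt_zero) (auto simp: field_simps)
  have "(\<Sum>k<M. cos (node M k / 2)) * sin (pi / (2 * real M)) = (sin (real M * (pi / (2 * real M))))^2"
    unfolding cos_half_node by (rule sum_sin_odd_mult_times_sin)
  also have "real M * (pi / (2 * real M)) = pi / 2" using assms by simp
  finally show ?thesis using s assms by (simp add: bidiag_bound_def field_simps)
qed

definition node_weight :: "nat \<Rightarrow> nat \<Rightarrow> real" where
  "node_weight M k = 2 * cos (node M k / 2) / real M"

lemma node_weight_nonneg: "k < M \<Longrightarrow> node_weight M k \<ge> 0"
  using cos_half_node_pos[of k M] by (simp add: node_weight_def)

lemma sum_node_weight: "M > 0 \<Longrightarrow> (\<Sum>k<M. node_weight M k) = bidiag_bound M"
  unfolding node_weight_def sum_divide_distrib[symmetric] sum_distrib_left[symmetric]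
  by (rule sum_cos_half_node)

lemma bidiag_ones_node_expansion:
  assumes i: "Suc i < M" and j: "j < M"
  shows "(bidiag_ones i j :: real) =
    (\<Sum>k<M. node_weight M k * cos ((real i - real j + 1/2) * node M k))"
proof -
  define l where "l = int i - int j"
  have M: "M > 0" using i by simp
  have "node_weight M k * cos ((real i - real j + 1/2) * node M k) =
      (cos (of_int (l + 1) * node M k) + cos (of_int l * node M k)) / real M" for k
  proof -
    have "2 * cos (node M k / 2) * cos ((real i - real j + 1/2) * node M k) =
        cos ((real i - real j + 1/2) * node M k + node M k / 2)
        + cos ((real i - real j + 1/2) * node M k - node M k / 2)"
      by (simp add: cos_add cos_diff)
    also have "(real i - real j + 1/2) * node M k + node M k / 2 = of_int (l + 1) * node M k"
      unfolding l_def by (simp add: algebra_simps)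
    also have "(real i - real j + 1/2) * node M k - node M k / 2 = of_int l * node M k"
      unfolding l_def by (simp add: algebra_simps)
    finally show ?thesis by (simp add: node_weight_def)
  qed
  then have "(\<Sum>k<M. node_weight M k * cos ((real i - real j + 1/2) * node M k)) =
      ((\<Sum>k<M. cos (of_int (l + 1) * node M k)) + (\<Sum>k<M. cos (of_int l * node M k))) / real M"
    by (simp add: sum.distrib sum_divide_distrib add_divide_distrib)
  also have "\<dots> = ((if l + 1 = 0 then real M else 0) + (if l = 0 then real M else 0)) / real M"
    using i j unfolding l_def by (subst (1 2) sum_cos_int_mult_node) (use M in auto)
  also have "\<dots> = bidiag_ones i j"
    using M unfolding l_def bidiag_ones_def by auto
  finally show ?thesis by simp
qed

lemma bidiag_ones_of_real: "(bidiag_ones i j :: 'a::real_normed_field) = of_real (bidiag_ones i j)"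
  by (simp add: bidiag_ones_def)

lemma mat_op_norm_leI:
  fixes X :: "nat \<Rightarrow> nat \<Rightarrow> 'a::real_normed_field"
  assumes c: "c \<ge> 0"
    and bound: "\<And>n x. (\<Sum>i<n. (norm (\<Sum>j<n. X i j * x j))^2) \<le> c^2 * (\<Sum>j<n. (norm (x j))^2)"
  shows "mat_op_norm X \<le> ereal c"
  unfolding mat_op_norm_def
proof (intro SUP_least)
  fix n and x :: "nat \<Rightarrow> 'a"
  assume "x \<in> {x. (\<Sum>j<n. (norm (x j))^2) \<le> 1}"
  then have "c^2 * (\<Sum>j<n. (norm (x j))^2) \<le> c^2" by (simp add: mult_left_le)
  with bound have "(\<Sum>i<n. (norm (\<Sum>j<n. X i j * x j))^2) \<le> c^2" by (rule order_trans)
  then have "sqrt (\<Sum>i<n. (norm (\<Sum>j<n. X i j * x j))^2) \<le> sqrt (c^2)"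
    by (rule real_sqrt_le_mono)
  then have "sqrt (\<Sum>i<n. (norm (\<Sum>j<n. X i j * x j))^2) \<le> c"
    using c by simp
  then show "ereal (sqrt (\<Sum>i<n. (norm (\<Sum>j<n. X i j * x j))^2)) \<le> ereal c" by simp
qed

lemma mat_op_norm_section_ge:
  fixes X :: "nat \<Rightarrow> nat \<Rightarrow> 'a::real_normed_field"
  assumes "(\<Sum>j<n. (norm (x j))^2) \<le> 1"
  shows "ereal (sqrt (\<Sum>i<n. (norm (\<Sum>j<n. X i j * x j))^2)) \<le> mat_op_norm X"
  unfolding mat_op_norm_def
  by (rule SUP_upper2[of n]) (use assms in \<open>auto intro!: SUP_upper\<close>)

lemma mat_op_norm_le_oneD:
  fixes X :: "nat \<Rightarrow> nat \<Rightarrow> 'a::real_normed_field"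
  assumes X: "mat_op_norm X \<le> 1"
  shows "(\<Sum>i<n. (norm (\<Sum>j<n. X i j * x j))^2) \<le> (\<Sum>j<n. (norm (x j))^2)"
proof (cases "(\<Sum>j<n. (norm (x j))^2) = 0")
  case True
  then have "\<forall>j\<in>{..<n}. x j = 0" by (simp add: sum_nonneg_eq_0_iff)
  then show ?thesis by simp
next
  case False
  define s where "s = (\<Sum>j<n. (norm (x j))^2)"
  have s: "s > 0" using False unfolding s_def by (simp add: order_less_le sum_nonneg)
  define t where "t = sqrt s"
  have t: "t > 0" "t^2 = s" unfolding t_def using s by simp_all
  define y where "y j = x j / of_real t" for j
  have "(\<Sum>j<n. (norm (y j))^2) = s / t^2"
    unfolding y_def s_def using t by (simp add: norm_divide power_divide sum_divide_distrib)
  then have y: "(\<Sum>j<n. (norm (y j))^2) \<le> 1" using t s by simp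
  have "(\<Sum>j<n. X i j * y j) = (\<Sum>j<n. X i j * x j) / of_real t" for i
    unfolding y_def by (simp add: sum_divide_distrib)
  then have "(norm (\<Sum>j<n. X i j * y j))^2 = (norm (\<Sum>j<n. X i j * x j))^2 / s" for i
    using t by (simp add: norm_divide power_divide)
  then have "(\<Sum>i<n. (norm (\<Sum>j<n. X i j * y j))^2) = (\<Sum>i<n. (norm (\<Sum>j<n. X i j * x j))^2) / s"
    by (simp add: sum_divide_distrib)
  moreover have "ereal (sqrt (\<Sum>i<n. (norm (\<Sum>j<n. X i j * y j))^2)) \<le> 1"
    using order_trans[OF mat_op_norm_section_ge[OF y] X] by simp
  ultimately have "(\<Sum>i<n. (norm (\<Sum>j<n. X i j * x j))^2) / s \<le> 1" by simp
  then show ?thesis using s unfolding s_def by (simp add: divide_le_eq_1)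
qed

lemma norm_scaleR_cos_sin_sq_le:
  fixes p q :: "'a::real_normed_vector"
  assumes "c^2 + s^2 = 1"
  shows "(norm (c *\<^sub>R p + s *\<^sub>R q))^2 \<le> (norm p)^2 + (norm q)^2"
proof -
  have "norm (c *\<^sub>R p + s *\<^sub>R q) \<le> \<bar>c\<bar> * norm p + \<bar>s\<bar> * norm q"
    by (metis norm_scaleR norm_triangle_ineq)
  then have "(norm (c *\<^sub>R p + s *\<^sub>R q))^2 \<le> (\<bar>c\<bar> * norm p + \<bar>s\<bar> * norm q)^2"
    by (intro power_mono) auto
  also have "\<dots> \<le> (\<bar>c\<bar>^2 + \<bar>s\<bar>^2) * ((norm p)^2 + (norm q)^2)"
  proof -
    have "0 \<le> (\<bar>c\<bar> * norm q - \<bar>s\<bar> * norm p)^2" by simp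
    then show ?thesis by (simp add: power2_eq_square algebra_simps del: abs_mult_self_eq)
  qed
  finally show ?thesis using assms by simp
qed

text \<open>Expanding cos(\<alpha>_i - \<beta>_j) = cos \<alpha>_i cos \<beta>_j + sin \<alpha>_i sin \<beta>_j splits the Schur product
  into two applications of X, recombined row by row with the Cauchy-Schwarz inequality.\<close>

lemma section_schur_cos_diff_le:
  fixes X :: "nat \<Rightarrow> nat \<Rightarrow> 'a::real_normed_field"
  assumes X: "mat_op_norm X \<le> 1"
  shows "(\<Sum>i<n. (norm (\<Sum>j<n. of_real (cos (a i - b j)) * X i j * x j))^2)
    \<le> (\<Sum>j<n. (norm (x j))^2)"
proof -
  define P where "P i = (\<Sum>j<n. X i j * (of_real (cos (b j)) * x j))" for i
  define Q where "Q i = (\<Sum>j<n. X i j * (of_real (sin (b j)) * x j))" for i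
  have row: "(\<Sum>j<n. of_real (cos (a i - b j)) * X i j * x j) = cos (a i) *\<^sub>R P i + sin (a i) *\<^sub>R Q i"
    for i
    unfolding P_def Q_def cos_diff scaleR_conv_of_real sum_distrib_left sum.distrib[symmetric]
    by (intro sum.cong refl) (simp add: algebra_simps)
  have "(\<Sum>i<n. (norm (\<Sum>j<n. of_real (cos (a i - b j)) * X i j * x j))^2)
      \<le> (\<Sum>i<n. (norm (P i))^2) + (\<Sum>i<n. (norm (Q i))^2)"
    unfolding row sum.distrib[symmetric] by (intro sum_mono norm_scaleR_cos_sin_sq_le) simp
  also have "\<dots> \<le> (\<Sum>j<n. (norm (of_real (cos (b j)) * x j))^2) + (\<Sum>j<n. (norm (of_real (sin (b j)) * x j))^2)"
    unfolding P_def Q_def by (intro add_mono mat_op_norm_le_oneD[OF X])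
  also have "\<dots> = (\<Sum>j<n. (norm (x j))^2)"
    unfolding sum.distrib[symmetric]
    by (intro sum.cong refl) (simp add: norm_mult power_mult_distrib flip: distrib_right)
  finally show ?thesis .
qed

lemma L2_set_norm_sum_scaleR_le:
  fixes V :: "'k \<Rightarrow> 'i \<Rightarrow> 'a::real_normed_vector"
  assumes "finite K" "\<And>k. k \<in> K \<Longrightarrow> w k \<ge> 0"
  shows "L2_set (\<lambda>i. norm (\<Sum>k\<in>K. w k *\<^sub>R V k i)) A \<le> (\<Sum>k\<in>K. w k * L2_set (\<lambda>i. norm (V k i)) A)"
  using assms
proof (induction K rule: finite_induct)
  case empty then show ?case by (simp add: L2_set_def)
next
  case (insert k K)
  have "L2_set (\<lambda>i. norm (\<Sum>k\<in>insert k K. w k *\<^sub>R V k i)) A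
      \<le> L2_set (\<lambda>i. w k * norm (V k i) + norm (\<Sum>k\<in>K. w k *\<^sub>R V k i)) A"
    by (rule L2_set_mono) (use insert in \<open>auto intro: order_trans[OF norm_triangle_ineq]\<close>)
  also have "\<dots> \<le> L2_set (\<lambda>i. w k * norm (V k i)) A + L2_set (\<lambda>i. norm (\<Sum>k\<in>K. w k *\<^sub>R V k i)) A"
    by (rule L2_set_triangle_ineq)
  also have "\<dots> \<le> w k * L2_set (\<lambda>i. norm (V k i)) A + (\<Sum>k\<in>K. w k * L2_set (\<lambda>i. norm (V k i)) A)"
    using insert by (simp add: L2_set_right_distrib)
  finally show ?case using insert by simp
qed

lemma section_schur_cos_mixture_le:
  fixes A X :: "nat \<Rightarrow> nat \<Rightarrow> 'a::real_normed_field" and K :: nat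
  assumes X: "mat_op_norm X \<le> 1" and w: "\<And>k. k < K \<Longrightarrow> w k \<ge> 0"
    and A: "\<And>i j. i < n \<Longrightarrow> j < n \<Longrightarrow> A i j = of_real (\<Sum>k<K. w k * cos (a k i - b k j))"
  shows "(\<Sum>i<n. (norm (\<Sum>j<n. schur_prod A X i j * x j))^2)
    \<le> (\<Sum>k<K. w k)^2 * (\<Sum>j<n. (norm (x j))^2)"
proof -
  define V where "V k i = (\<Sum>j<n. of_real (cos (a k i - b k j)) * X i j * x j)" for k i
  define nx where "nx = (\<Sum>j<n. (norm (x j))^2)"
  have nx: "nx \<ge> 0" unfolding nx_def by (simp add: sum_nonneg)
  have row: "(\<Sum>j<n. schur_prod A X i j * x j) = (\<Sum>k<K. w k *\<^sub>R V k i)" if "i < n" for i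
  proof -
    have "(\<Sum>j<n. schur_prod A X i j * x j) =
        (\<Sum>j<n. \<Sum>k<K. w k *\<^sub>R (of_real (cos (a k i - b k j)) * X i j * x j))"
      unfolding schur_prod_def scaleR_conv_of_real
      by (intro sum.cong refl) (simp add: A that sum_distrib_right mult.assoc)
    also have "\<dots> = (\<Sum>k<K. w k *\<^sub>R V k i)"
      unfolding V_def scaleR_sum_right by (rule sum.swap)
    finally show ?thesis .
  qed
  have "L2_set (\<lambda>i. norm (\<Sum>j<n. schur_prod A X i j * x j)) {..<n}
      = L2_set (\<lambda>i. norm (\<Sum>k<K. w k *\<^sub>R V k i)) {..<n}"
    by (rule L2_set_cong) (simp_all add: row)
  also have "\<dots> \<le> (\<Sum>k<K. w k * L2_set (\<lambda>i. norm (V k i)) {..<n})"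
    by (rule L2_set_norm_sum_scaleR_le) (auto intro: w)
  also have "\<dots> \<le> (\<Sum>k<K. w k * sqrt nx)"
  proof (intro sum_mono mult_left_mono)
    fix k
    show "L2_set (\<lambda>i. norm (V k i)) {..<n} \<le> sqrt nx"
      unfolding L2_set_def V_def nx_def
      by (intro real_sqrt_le_mono section_schur_cos_diff_le[OF X])
  qed (simp add: w)
  also have "\<dots> = (\<Sum>k<K. w k) * sqrt nx"
    by (simp add: sum_distrib_right)
  finally have "(L2_set (\<lambda>i. norm (\<Sum>j<n. schur_prod A X i j * x j)) {..<n})^2
      \<le> ((\<Sum>k<K. w k) * sqrt nx)^2"
    by (intro power_mono) (simp_all add: L2_set_nonneg)
  then show ?thesis
    unfolding L2_set_def nx_def[symmetric] power_mult_distrib real_sqrt_pow2[OF nx]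
    by (simp add: sum_nonneg)
qed

lemma section_schur_bidiag_le:
  fixes X :: "nat \<Rightarrow> nat \<Rightarrow> 'a::real_normed_field"
  assumes X: "mat_op_norm X \<le> 1" and M: "n < M"
  shows "(\<Sum>i<n. (norm (\<Sum>j<n. schur_prod bidiag_ones X i j * x j))^2)
    \<le> (bidiag_bound M)^2 * (\<Sum>j<n. (norm (x j))^2)"
proof -
  have "(bidiag_ones i j :: 'a) =
      of_real (\<Sum>k<M. node_weight M k * cos ((real i + 1/2) * node M k - real j * node M k))"
    if "i < n" "j < n" for i j
  proof -
    have "(real i + 1/2) * node M k - real j * node M k = (real i - real j + 1/2) * node M k" for k
      by (simp add: algebra_simps)
    then show ?thesis
      using bidiag_ones_node_expansion[of i M j] that M by (subst bidiag_ones_of_real) simp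
  qed
  from section_schur_cos_mixture_le[OF X node_weight_nonneg this]
  show ?thesis using M by (simp add: sum_node_weight)
qed

lemma mat_op_norm_schur_bidiag_le:
  fixes X :: "nat \<Rightarrow> nat \<Rightarrow> 'a::real_normed_field"
  assumes X: "mat_op_norm X \<le> 1"
  shows "mat_op_norm (schur_prod bidiag_ones X) \<le> ereal (4 / pi)"
proof (rule mat_op_norm_leI)
  fix n and x :: "nat \<Rightarrow> 'a"
  have "(\<lambda>M. (bidiag_bound M)^2 * (\<Sum>j<n. (norm (x j))^2)) \<longlonglongrightarrow> (4 / pi)^2 * (\<Sum>j<n. (norm (x j))^2)"
    by (intro tendsto_intros bidiag_bound_tendsto)
  then show "(\<Sum>i<n. (norm (\<Sum>j<n. schur_prod bidiag_ones X i j * x j))^2) \<le> (4 / pi)^2 * (\<Sum>j<n. (norm (x j))^2)"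
    by (rule LIMSEQ_le_const) (use section_schur_bidiag_le[OF X] in \<open>auto intro!: exI[of _ "Suc n"]\<close>)
qed simp

lemma schur_norm_bidiag_le: "schur_norm (bidiag_ones :: nat \<Rightarrow> nat \<Rightarrow> 'a::real_normed_field) \<le> ereal (4 / pi)"
  unfolding schur_norm_def by (rule SUP_least) (simp add: mat_op_norm_schur_bidiag_le)

lemma mat_op_norm_Re_le:
  fixes X :: "nat \<Rightarrow> nat \<Rightarrow> complex"
  shows "mat_op_norm (\<lambda>i j. Re (X i j)) \<le> mat_op_norm X"
  unfolding mat_op_norm_def[of "\<lambda>i j. Re (X i j)"]
proof (intro SUP_least)
  fix n and x :: "nat \<Rightarrow> real"
  assume "x \<in> {x. (\<Sum>j<n. (norm (x j))^2) \<le> 1}"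
  then have x: "(\<Sum>j<n. (norm (complex_of_real (x j)))^2) \<le> 1" by simp
  have "(\<Sum>i<n. (norm (\<Sum>j<n. Re (X i j) * x j))^2) = (\<Sum>i<n. (Re (\<Sum>j<n. X i j * of_real (x j)))^2)"
    by simp
  also have "\<dots> \<le> (\<Sum>i<n. (cmod (\<Sum>j<n. X i j * of_real (x j)))^2)"
    by (intro sum_mono) (metis abs_Re_le_cmod abs_le_square_iff abs_norm_cancel)
  finally have "ereal (sqrt (\<Sum>i<n. (norm (\<Sum>j<n. Re (X i j) * x j))^2))
      \<le> ereal (sqrt (\<Sum>i<n. (norm (\<Sum>j<n. X i j * of_real (x j)))^2))"
    by simp
  also have "\<dots> \<le> mat_op_norm X"
    by (rule mat_op_norm_section_ge[OF x])
  finally show "ereal (sqrt (\<Sum>i<n. (norm (\<Sum>j<n. Re (X i j) * x j))^2)) \<le> mat_op_norm X" .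
qed

lemma schur_bidiag_row_sum:
  fixes X :: "nat \<Rightarrow> nat \<Rightarrow> 'a::ring_1"
  assumes "Suc i < N"
  shows "(\<Sum>j<N. schur_prod bidiag_ones X i j * y j) = X i i * y i + X i (Suc i) * y (Suc i)"
proof -
  have "(\<Sum>j<N. schur_prod bidiag_ones X i j * y j) = (\<Sum>j\<in>{i, Suc i}. X i j * y j)"
    by (rule sum.mono_neutral_cong_right)
      (use assms in \<open>auto simp: schur_prod_def bidiag_ones_def\<close>)
  then show ?thesis by simp
qed

text \<open>Only the last row of the N \<times> N section misses its superdiagonal entry, whence the factor
  \<surd>((N-1)/N) when testing on the constant unit vector.\<close>

lemma mat_op_norm_schur_bidiag_ge:
  fixes X :: "nat \<Rightarrow> nat \<Rightarrow> 'a::real_normed_field"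
  assumes N: "N > 0" and c: "c \<ge> 0"
    and diag: "\<And>i. Suc i < N \<Longrightarrow> c \<le> norm (X i i + X i (Suc i))"
  shows "ereal (sqrt ((real N - 1) / real N) * c) \<le> mat_op_norm (schur_prod bidiag_ones X)"
proof -
  define x :: "nat \<Rightarrow> 'a" where "x j = of_real (1 / sqrt (real N))" for j
  define S where "S = (\<Sum>i<N. (norm (\<Sum>j<N. schur_prod bidiag_ones X i j * x j))^2)"
  have x: "(\<Sum>j<N. (norm (x j))^2) \<le> 1"
    unfolding x_def norm_of_real using N by (simp add: power_divide)
  have row: "c^2 / real N \<le> (norm (\<Sum>j<N. schur_prod bidiag_ones X i j * x j))^2" if i: "Suc i < N" for i
  proof -
    have "c^2 \<le> (norm (X i i + X i (Suc i)))^2"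
      using diag[OF i] c by (intro power_mono) auto
    also have "\<dots> = real N * (norm (\<Sum>j<N. schur_prod bidiag_ones X i j * x j))^2"
    proof -
      have "(\<Sum>j<N. schur_prod bidiag_ones X i j * x j) = (X i i + X i (Suc i)) * of_real (1 / sqrt (real N))"
        unfolding schur_bidiag_row_sum[OF i] x_def by (simp only: distrib_right)
      then show ?thesis
        using N by (simp add: norm_divide power_divide)
    qed
    finally show ?thesis using N by (simp add: field_simps)
  qed
  have "(real N - 1) / real N * c^2 = (\<Sum>i<N - 1. c^2 / real N)"
    using N by (simp add: of_nat_diff)
  also have "\<dots> \<le> (\<Sum>i<N - 1. (norm (\<Sum>j<N. schur_prod bidiag_ones X i j * x j))^2)"
    by (rule sum_mono) (use row in auto)
  also have "\<dots> \<le> S"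
    unfolding S_def by (rule sum_mono2) auto
  finally have bound: "(real N - 1) / real N * c^2 \<le> S" .
  have "sqrt ((real N - 1) / real N) * c = sqrt ((real N - 1) / real N * c^2)"
    by (simp only: real_sqrt_mult real_sqrt_abs abs_of_nonneg[OF c])
  also have "\<dots> \<le> sqrt S"
    using bound by (rule real_sqrt_le_mono)
  finally have "ereal (sqrt ((real N - 1) / real N) * c) \<le> ereal (sqrt S)"
    by (simp only: ereal_less_eq)
  also have "\<dots> \<le> mat_op_norm (schur_prod bidiag_ones X)"
    unfolding S_def by (rule mat_op_norm_section_ge[OF x])
  finally show ?thesis .
qed

lemma sqrt_pred_div_tendsto_one: "(\<lambda>N. sqrt ((real N - 1) / real N)) \<longlonglongrightarrow> 1"
  by real_asymp

lemma schur_norm_bidiag_eq: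
  fixes T :: "nat \<Rightarrow> nat \<Rightarrow> nat \<Rightarrow> 'a::real_normed_field"
  assumes T: "\<And>N. N > 0 \<Longrightarrow> mat_op_norm (T N) \<le> 1"
    and diag: "\<And>N i. Suc i < N \<Longrightarrow> bidiag_bound N \<le> norm (T N i i + T N i (Suc i))"
  shows "schur_norm (bidiag_ones :: nat \<Rightarrow> nat \<Rightarrow> 'a) = ereal (4 / pi)"
proof (rule antisym[OF schur_norm_bidiag_le])
  have lower: "ereal (sqrt ((real N - 1) / real N) * bidiag_bound N) \<le> schur_norm (bidiag_ones :: nat \<Rightarrow> nat \<Rightarrow> 'a)"
    if N: "N > 0" for N
    using mat_op_norm_schur_bidiag_ge[where X="T N", OF N bidiag_bound_nonneg diag] T[OF N]
    unfolding schur_norm_def by (blast intro: SUP_upper2)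
  have "(\<lambda>N. sqrt ((real N - 1) / real N) * bidiag_bound N) \<longlonglongrightarrow> 1 * (4 / pi)"
    by (intro tendsto_mult bidiag_bound_tendsto sqrt_pred_div_tendsto_one)
  then have "(\<lambda>N. ereal (sqrt ((real N - 1) / real N) * bidiag_bound N)) \<longlonglongrightarrow> ereal (4 / pi)"
    by simp
  then show "ereal (4 / pi) \<le> schur_norm (bidiag_ones :: nat \<Rightarrow> nat \<Rightarrow> 'a)"
    by (rule LIMSEQ_le_const2) (use lower in \<open>auto intro!: exI[of _ 1]\<close>)
qed

lemma sum_norm_sq_orthogonal_combination:
  fixes u :: "nat \<Rightarrow> nat \<Rightarrow> complex" and a :: "nat \<Rightarrow> complex"
  assumes orth: "\<And>k k'. k < K \<Longrightarrow> k' < K \<Longrightarrow>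
      (\<Sum>i<N. u k i * cnj (u k' i)) = (if k = k' then of_real c else 0)"
  shows "(\<Sum>i<N. (cmod (\<Sum>k<K. a k * u k i))^2) = c * (\<Sum>k<K. (cmod (a k))^2)"
proof -
  have "complex_of_real (\<Sum>i<N. (cmod (\<Sum>k<K. a k * u k i))^2)
     = (\<Sum>i<N. (\<Sum>k<K. a k * u k i) * cnj (\<Sum>k<K. a k * u k i))"
    by (simp only: of_real_sum complex_norm_square)
  also have "\<dots> = (\<Sum>i<N. \<Sum>k<K. \<Sum>k'<K. a k * cnj (a k') * (u k i * cnj (u k' i)))"
    unfolding cnj_sum sum_product complex_cnj_mult by (intro sum.cong refl) (simp only: mult_ac)
  also have "\<dots> = (\<Sum>k<K. \<Sum>k'<K. a k * cnj (a k') * (\<Sum>i<N. u k i * cnj (u k' i)))"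
    by (simp add: sum_distrib_left sum.swap[of _ "{..<N}"])
  also have "\<dots> = (\<Sum>k<K. a k * cnj (a k) * of_real c)"
    by (simp add: orth if_distrib cong: if_cong)
  also have "\<dots> = complex_of_real (c * (\<Sum>k<K. (cmod (a k))^2))"
    unfolding of_real_mult of_real_sum sum_distrib_left complex_norm_square by (simp only: mult_ac)
  finally show ?thesis by (simp only: of_real_eq_iff)
qed

lemma fourier_nodes_columns_orthogonal:
  assumes "k < M" "k' < M"
  shows "(\<Sum>i<M. cis (real i * node M k) * cnj (cis (real i * node M k'))) = (if k = k' then of_nat M else 0)"
proof -
  have M: "M > 0" using assms by simp
  have "cis (real i * node M k) * cnj (cis (real i * node M k')) =
      cis (2 * pi * real i * of_int (int k - int k') / real M)" for i
    unfolding cis_cnj cis_mult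
    by (rule arg_cong[where f = cis]) (use M in \<open>simp add: node_def field_simps\<close>)
  then show ?thesis
    using sum_cis_roots_of_unity[OF M, of "int k - int k'"] assms by simp
qed

lemma fourier_nodes_rows_orthogonal:
  assumes "j < M" "j' < M"
  shows "(\<Sum>k<M. cnj (cis (real j * node M k)) * cis (real j' * node M k)) = (if j = j' then of_nat M else 0)"
proof -
  have "cnj (cis (real j * node M k)) * cis (real j' * node M k) = cis (of_int (int j' - int j) * node M k)" for k
    unfolding cis_cnj cis_mult by (simp add: algebra_simps)
  then show ?thesis
    using sum_cis_int_mult_node[of M "int j' - int j"] assms by auto
qed

text \<open>The matrix U = F diag(e^{i\<theta>_k/2}) F^*/N, with F = [e^{ij\<theta>_k}], cut off outside the
  N \<times> N corner.\<close>

definition half_shift :: "nat \<Rightarrow> nat \<Rightarrow> nat \<Rightarrow> complex" where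
  "half_shift N i j =
    (if i < N \<and> j < N then (\<Sum>k<N. cis ((real i - real j + 1/2) * node N k)) / of_nat N else 0)"

lemma half_shift_section_isometry:
  assumes N: "N > 0"
  shows "(\<Sum>i<N. (cmod (\<Sum>j<N. half_shift N i j * y j))^2) = (\<Sum>j<N. (cmod (y j))^2)"
proof -
  define F where "F k = (\<Sum>j<N. y j * cnj (cis (real j * node N k)))" for k
  define a where "a k = cis (node N k / 2) * F k / of_nat N" for k
  have entry: "cis ((real i - real j + 1/2) * node N k) =
      cis (node N k / 2) * cis (real i * node N k) * cnj (cis (real j * node N k))" for i j k
    unfolding cis_cnj cis_mult by (rule arg_cong[where f = cis]) (simp add: algebra_simps)
  have row: "(\<Sum>j<N. half_shift N i j * y j) = (\<Sum>k<N. a k * cis (real i * node N k))" if i: "i < N" for i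
  proof -
    have "half_shift N i j * y j =
        (\<Sum>k<N. cis (node N k / 2) * (y j * cnj (cis (real j * node N k))) / of_nat N * cis (real i * node N k))"
      if "j < N" for j
      using i that unfolding half_shift_def entry
      by (simp add: sum_divide_distrib sum_distrib_left sum_distrib_right mult_ac)
    then have "(\<Sum>j<N. half_shift N i j * y j) =
        (\<Sum>j<N. \<Sum>k<N. cis (node N k / 2) * (y j * cnj (cis (real j * node N k))) / of_nat N * cis (real i * node N k))"
      by simp
    also have "\<dots> = (\<Sum>k<N. a k * cis (real i * node N k))"
      unfolding a_def F_def by (subst sum.swap) (simp add: sum_divide_distrib sum_distrib_left sum_distrib_right)
    finally show ?thesis .
  qed
  have "(\<Sum>i<N. (cmod (\<Sum>j<N. half_shift N i j * y j))^2) = (\<Sum>i<N. (cmod (\<Sum>k<N. a k * cis (real i * node N k)))^2)"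
    by (simp add: row)
  also have "\<dots> = real N * (\<Sum>k<N. (cmod (a k))^2)"
    by (rule sum_norm_sq_orthogonal_combination) (simp add: fourier_nodes_columns_orthogonal)
  also have "\<dots> = (\<Sum>k<N. (cmod (F k))^2) / real N"
    using N by (simp add: a_def norm_mult norm_divide power_divide power2_eq_square sum_divide_distrib sum_distrib_left)
  also have "(\<Sum>k<N. (cmod (F k))^2) = real N * (\<Sum>j<N. (cmod (y j))^2)"
    unfolding F_def by (rule sum_norm_sq_orthogonal_combination) (simp add: fourier_nodes_rows_orthogonal)
  finally show ?thesis using N by simp
qed

lemma mat_op_norm_half_shift_le:
  assumes N: "N > 0"
  shows "mat_op_norm (half_shift N) \<le> 1"
proof -
  have "(\<Sum>i<n. (norm (\<Sum>j<n. half_shift N i j * x j))^2) \<le> 1^2 * (\<Sum>j<n. (norm (x j))^2)" for n x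
  proof -
    define y where "y j = (if j < n then x j else 0)" for j
    have row: "(\<Sum>j<n. half_shift N i j * x j) = (\<Sum>j<N. half_shift N i j * y j)" for i
    proof -
      have "(\<Sum>j<n. half_shift N i j * x j) = (\<Sum>j<min n N. half_shift N i j * x j)"
        by (rule sum.mono_neutral_right) (auto simp: half_shift_def)
      also have "\<dots> = (\<Sum>j<min n N. half_shift N i j * y j)"
        by (simp add: y_def)
      also have "\<dots> = (\<Sum>j<N. half_shift N i j * y j)"
        by (rule sum.mono_neutral_left) (auto simp: y_def)
      finally show ?thesis .
    qed
    have "(\<Sum>i<n. (norm (\<Sum>j<n. half_shift N i j * x j))^2) = (\<Sum>i<min n N. (cmod (\<Sum>j<N. half_shift N i j * y j))^2)"
      unfolding row by (rule sum.mono_neutral_right) (auto simp: half_shift_def min_le_iff_disj)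
    also have "\<dots> \<le> (\<Sum>i<N. (cmod (\<Sum>j<N. half_shift N i j * y j))^2)"
      by (rule sum_mono2) auto
    also have "\<dots> = (\<Sum>j<N. (cmod (y j))^2)"
      by (rule half_shift_section_isometry[OF N])
    also have "\<dots> = (\<Sum>j<min n N. (cmod (y j))^2)"
      by (rule sum.mono_neutral_right) (auto simp: y_def)
    also have "\<dots> = (\<Sum>j<min n N. (cmod (x j))^2)"
      by (simp add: y_def)
    also have "\<dots> \<le> (\<Sum>j<n. (norm (x j))^2)"
      by (rule sum_mono2) auto
    finally show ?thesis by simp
  qed
  then show ?thesis
    using mat_op_norm_leI[of 1 "half_shift N"] by (simp add: one_ereal_def)
qed

lemma Re_half_shift_bidiag:
  assumes "Suc i < N"
  shows "Re (half_shift N i i + half_shift N i (Suc i)) = bidiag_bound N"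
proof -
  have "Re (half_shift N i i + half_shift N i (Suc i)) = 2 * (\<Sum>k<N. cos (node N k / 2)) / real N"
    using assms by (simp add: half_shift_def Re_divide_of_nat add_divide_distrib)
  then show ?thesis using assms by (simp add: sum_cos_half_node)
qed

theorem corollary4p6:
  shows "schur_norm (bidiag_ones :: nat \<Rightarrow> nat \<Rightarrow> real) = ereal (4 / pi)
       \<and> schur_norm (bidiag_ones :: nat \<Rightarrow> nat \<Rightarrow> complex) = ereal (4 / pi)"
proof
  show "schur_norm (bidiag_ones :: nat \<Rightarrow> nat \<Rightarrow> real) = ereal (4 / pi)"
  proof (rule schur_norm_bidiag_eq)
    show "mat_op_norm (\<lambda>i j. Re (half_shift N i j)) \<le> 1" if "N > 0" for N
      using mat_op_norm_Re_le mat_op_norm_half_shift_le[OF that] by (rule order_trans)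
    show "bidiag_bound N \<le> norm (Re (half_shift N i i) + Re (half_shift N i (Suc i)))"
      if "Suc i < N" for N i
      using Re_half_shift_bidiag[OF that] by simp
  qed
  show "schur_norm (bidiag_ones :: nat \<Rightarrow> nat \<Rightarrow> complex) = ereal (4 / pi)"
  proof (rule schur_norm_bidiag_eq)
    show "mat_op_norm (half_shift N) \<le> 1" if "N > 0" for N
      using that by (rule mat_op_norm_half_shift_le)
    show "bidiag_bound N \<le> norm (half_shift N i i + half_shift N i (Suc i))"
      if "Suc i < N" for N i
      using Re_half_shift_bidiag[OF that] complex_Re_le_cmod by metis
  qed
qed

end
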